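(* Let $\{(u_{0,n},u_{1,n})\}_n$ be a bounded sequence in $\dot H^1\times L^2(\mathbb{R}^N)$ with a profile decomposition $(U_L^j,\{\lambda_{j,n},x_{j,n},t_{j,n}\}_n)_{j\geq1}$ and nonlinear profiles $U^j$. Then one can extract subsequences in $n$ so that the binary relation $\preceq$ on indices is a total preorder, that is: (1) $(j)\simeq(j)$ for all $j$; (2) if $(j)\preceq(k)$ and $(k)\preceq(\ell)$ then $(j)\preceq(\ell)$; (3) for all $j,k$, $(j)\preceq(k)$ or $(k)\preceq(j)$; (4) $(j)\prec(k)$ is equivalent to [$(j)\preceq(k)$ and not $(j)\simeq(k)$].
   Context: $N\in\{3,4,5\}$; the nonlinear equation is $\partial_t^2u-\Delta u-|u|^{\frac4{N-2}}u=0$, locally well-posed in $\dot H^1\times L^2$; $S(I)=L^{\frac{2(N+1)}{N-2}}(I\times\mathbb{R}^N)$; a solution scatters forward in time if its $S$-norm on $[0,T_+)$ is finite. Profile decomposition: $U_L^j$ finite-energy solutions of the linear wave equation, parameters orthogonal (for $j\ne k$, $\lim_n|\log\frac{\lambda_{j,n}}{\lambda_{k,n}}|+\frac{|t_{j,n}-t_{k,n}|}{\lambda_{j,n}}+\frac{|x_{j,n}-x_{k,n}|}{\lambda_{j,n}}=\infty$), and $\lim_J\limsup_n\|S_L(t)(u_{0,n},u_{1,n})-\sum_{j\le J}\lambda_{j,n}^{-\frac N2+1}U_L^j(\frac{t-t_{j,n}}{\lambda_{j,n}},\frac{x-x_{j,n}}{\lambda_{j,n}})\|_{S(\mathbb{R})}=0$.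 Extracting subsequences, $-t_{j,n}/\lambda_{j,n}$ has a limit in $[-\infty,\infty]$ for each $j$; the nonlinear profile $U^j$ is the unique solution of the nonlinear equation with $-t_{j,n}/\lambda_{j,n}$ in its maximal interval for large $n$ and $\lim_n\|(U_L^j,\partial_tU_L^j)(-t_{j,n}/\lambda_{j,n})-(U^j,\partial_tU^j)(-t_{j,n}/\lambda_{j,n})\|_{\dot H^1\times L^2}=0$. Relation: $(j)\preceq(k)$ if either $U^k$ scatters forward in time, or $U^j$ does not scatter forward in time and for all $T<T_+(U^j)$, $\lim_n\frac{\lambda_{j,n}T+t_{j,n}-t_{k,n}}{\lambda_{k,n}}<T_+(U^k)$ (subsequences are extracted so that these limits exist). $(j)\simeq(k)$ means $(j)\preceq(k)$ and $(k)\preceq(j)$; $(j)\prec(k)$ means that $(k)\preceq(j)$ does not hold. *)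

theory Defs
  imports "HOL-Analysis.Analysis"
begin

definition pd :: "'a::euclidean_space \<Rightarrow> ('a \<Rightarrow> real) \<Rightarrow> 'a \<Rightarrow> real" where
  "pd v \<phi> = (\<lambda>x. frechet_derivative \<phi> (at x) v)"

definition smooth_fun :: "('a::euclidean_space \<Rightarrow> real) \<Rightarrow> bool" where
  "smooth_fun \<phi> \<longleftrightarrow> (\<forall>ds. set ds \<subseteq> Basis \<longrightarrow> foldr pd ds \<phi> differentiable_on UNIV)"

definition test_fun :: "'a::euclidean_space set \<Rightarrow> ('a \<Rightarrow> real) \<Rightarrow> bool" where
  "test_fun O' \<phi> \<longleftrightarrow> smooth_fun \<phi> \<and> compact (closure {x. \<phi> x \<noteq> 0})
      \<and> closure {x. \<phi> x \<noteq> 0} \<subseteq> O'"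

definition Lp_int :: "real \<Rightarrow> ('a::euclidean_space \<Rightarrow> real) \<Rightarrow> ennreal" where
  "Lp_int p f = (\<integral>\<^sup>+x. ennreal (\<bar>f x\<bar> powr p) \<partial>lborel)"

definition in_Lp :: "real \<Rightarrow> ('a::euclidean_space \<Rightarrow> real) \<Rightarrow> bool" where
  "in_Lp p f \<longleftrightarrow> f \<in> borel_measurable lborel \<and> Lp_int p f < \<infinity>"

definition Lp_norm :: "real \<Rightarrow> ('a::euclidean_space \<Rightarrow> real) \<Rightarrow> real" where
  "Lp_norm p f = enn2real (Lp_int p f) powr (1 / p)"

definition weak_grad :: "(real^'n \<Rightarrow> real) \<Rightarrow> (real^'n \<Rightarrow> real^'n) \<Rightarrow> bool" where
  "weak_grad f g \<longleftrightarrow> g \<in> borel_measurable lborel \<and>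
     (\<forall>\<phi>. test_fun UNIV \<phi> \<longrightarrow> (\<forall>i.
        (\<integral>x. f x * pd (axis i 1) \<phi> x \<partial>lborel) = - (\<integral>x. g x $ i * \<phi> x \<partial>lborel)))"

definition sob_exp :: "'n::finite itself \<Rightarrow> real" where
  "sob_exp _ = 2 * real CARD('n) / (real CARD('n) - 2)"

definition Hdot1 :: "(real^'n::finite \<Rightarrow> real) \<Rightarrow> bool" where
  "Hdot1 f \<longleftrightarrow> in_Lp (sob_exp TYPE('n)) f \<and>
      (\<exists>g. weak_grad f g \<and> in_Lp 2 (\<lambda>x. norm (g x)))"

definition grad :: "(real^'n::finite \<Rightarrow> real) \<Rightarrow> real^'n \<Rightarrow> real^'n" where
  "grad f = (SOME g. weak_grad f g \<and> in_Lp 2 (\<lambda>x. norm (g x)))"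

definition Hdot1_norm :: "(real^'n::finite \<Rightarrow> real) \<Rightarrow> real" where
  "Hdot1_norm f = Lp_norm 2 (\<lambda>x. norm (grad f x))"

text \<open>A norm on \<open>H1dot \<times> L2\<close> (equivalent to the usual one).\<close>
definition E_norm :: "(real^'n::finite \<Rightarrow> real) \<Rightarrow> (real^'n \<Rightarrow> real) \<Rightarrow> real" where
  "E_norm f0 f1 = Hdot1_norm f0 + Lp_norm 2 f1"

definition S_exp :: "'n::finite itself \<Rightarrow> real" where
  "S_exp _ = 2 * (real CARD('n) + 1) / (real CARD('n) - 2)"

text \<open>q-th power of the \<open>S(I)\<close> norm, \<open>q = 2(N+1)/(N-2)\<close>.\<close>
definition S_int :: "real set \<Rightarrow> (real \<Rightarrow> real^'n::finite \<Rightarrow> real) \<Rightarrow> ennreal" where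
  "S_int I u = (\<integral>\<^sup>+z. indicator (I \<times> UNIV) z * ennreal (\<bar>u (fst z) (snd z)\<bar> powr S_exp TYPE('n)) \<partial>lborel)"

definition lap :: "(real \<times> (real^'n::finite) \<Rightarrow> real) \<Rightarrow> real \<times> (real^'n) \<Rightarrow> real" where
  "lap \<psi> = (\<lambda>z. \<Sum>i\<in>UNIV. pd (0, axis i 1) (pd (0, axis i 1) \<psi>) z)"

definition dt :: "(real \<times> (real^'n::finite) \<Rightarrow> real) \<Rightarrow> real \<times> (real^'n) \<Rightarrow> real" where
  "dt \<psi> = pd (1, 0) \<psi>"

text \<open>\<open>wave_sol c I u v\<close>: \<open>(u, v = \<partial>_t u)\<close> is a finite-energy solution on the interval \<open>I\<close> of
  \<open>\<partial>_t^2 u - \<Delta> u - c |u|^{4/(N-2)} u = 0\<close> (\<open>c = 0\<close>: linear, \<open>c = 1\<close>: nonlinear equation),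
  in the energy/Strichartz class, in the sense of distributions.\<close>
definition wave_sol :: "real \<Rightarrow> real set \<Rightarrow> (real \<Rightarrow> real^'n::finite \<Rightarrow> real) \<Rightarrow> (real \<Rightarrow> real^'n \<Rightarrow> real) \<Rightarrow> bool" where
  "wave_sol c I u v \<longleftrightarrow>
     is_interval I \<and> open I \<and> I \<noteq> {} \<and>
     (\<lambda>z. u (fst z) (snd z)) \<in> borel_measurable lborel \<and>
     (\<lambda>z. v (fst z) (snd z)) \<in> borel_measurable lborel \<and>
     (\<forall>s\<in>I. Hdot1 (u s) \<and> in_Lp 2 (v s)) \<and>
     (\<forall>s\<in>I. ((\<lambda>s'. E_norm (\<lambda>x. u s' x - u s x) (\<lambda>x. v s' x - v s x)) \<longlongrightarrow> 0) (at s within I)) \<and>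
     (\<forall>J. compact J \<and> J \<subseteq> I \<longrightarrow> S_int J u < \<infinity>) \<and>
     (\<forall>\<psi>. test_fun (I \<times> UNIV) \<psi> \<longrightarrow>
        integrable lborel (\<lambda>z. u (fst z) (snd z) * dt \<psi> z + v (fst z) (snd z) * \<psi> z) \<and>
        (\<integral>z. u (fst z) (snd z) * dt \<psi> z + v (fst z) (snd z) * \<psi> z \<partial>lborel) = 0) \<and>
     (\<forall>\<psi>. test_fun (I \<times> UNIV) \<psi> \<longrightarrow>
        integrable lborel (\<lambda>z. - v (fst z) (snd z) * dt \<psi> z - u (fst z) (snd z) * lap \<psi> z
            - c * (\<bar>u (fst z) (snd z)\<bar> powr (4 / (real CARD('n) - 2)) * u (fst z) (snd z)) * \<psi> z) \<and>
        (\<integral>z. - v (fst z) (snd z) * dt \<psi> z - u (fst z) (snd z) * lap \<psi> z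
            - c * (\<bar>u (fst z) (snd z)\<bar> powr (4 / (real CARD('n) - 2)) * u (fst z) (snd z)) * \<psi> z \<partial>lborel) = 0)"

definition eint :: "ereal \<Rightarrow> ereal \<Rightarrow> real set" where
  "eint a b = {s. a < ereal s \<and> ereal s < b}"

definition maximal_sol :: "(real \<Rightarrow> real^'n::finite \<Rightarrow> real) \<Rightarrow> (real \<Rightarrow> real^'n \<Rightarrow> real) \<Rightarrow> ereal \<Rightarrow> ereal \<Rightarrow> bool" where
  "maximal_sol u v a b \<longleftrightarrow> a < b \<and> wave_sol 1 (eint a b) u v \<and>
     \<not> (\<exists>a' b' u' v'. a' \<le> a \<and> b \<le> b' \<and> (a' < a \<or> b < b') \<and>
          wave_sol 1 (eint a' b') u' v' \<and> (\<forall>s\<in>eint a b. u' s = u s \<and> v' s = v s))"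

definition scatters_fwd :: "(real \<Rightarrow> real^'n::finite \<Rightarrow> real) \<Rightarrow> ereal \<Rightarrow> ereal \<Rightarrow> bool" where
  "scatters_fwd u a b \<longleftrightarrow> (\<exists>t0. a < ereal t0 \<and> ereal t0 < b \<and> S_int {s. t0 \<le> s \<and> ereal s < b} u < \<infinity>)"

definition resc :: "real \<Rightarrow> real \<Rightarrow> real^'n::finite \<Rightarrow> (real \<Rightarrow> real^'n \<Rightarrow> real) \<Rightarrow> real \<Rightarrow> real^'n \<Rightarrow> real" where
  "resc l tn xn U = (\<lambda>s y. l powr (1 - real CARD('n) / 2) * U ((s - tn) / l) ((1 / l) *\<^sub>R (y - xn)))"

text \<open>\<open>prec_rel sc Tp lam t j k\<close> is \<open>(j) \<preceq> (k)\<close>; \<open>sc k\<close>: \<open>U^k\<close> scatters forward; \<open>Tp k = T_+(U^k)\<close>.\<close>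
definition prec_rel :: "(nat \<Rightarrow> bool) \<Rightarrow> (nat \<Rightarrow> ereal) \<Rightarrow> (nat \<Rightarrow> nat \<Rightarrow> real) \<Rightarrow> (nat \<Rightarrow> nat \<Rightarrow> real) \<Rightarrow> nat \<Rightarrow> nat \<Rightarrow> bool" where
  "prec_rel sc Tp lam t j k \<longleftrightarrow> sc k \<or>
     (\<not> sc j \<and> (\<forall>T. ereal T < Tp j \<longrightarrow>
        lim (\<lambda>n. ereal ((lam j n * T + t j n - t k n) / lam k n)) < Tp k))"

end

theory Submission
  imports Defs "HOL-Library.Diagonal_Subsequence"
begin

text \<open>For profiles \<open>j, k\<close> the time \<open>(\<lambda>_{j,n} T + t_{j,n} - t_{k,n}) / \<lambda>_{k,n}\<close> is an affine function of \<open>T\<close>,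
  and an affine sequence \<open>T a_n + b_n\<close> converges in the extended reals for every \<open>T\<close> as soon as
  \<open>a_n\<close>, \<open>b_n\<close>, \<open>b_n / a_n\<close> and \<open>b_n - C a_n\<close> do; a diagonal extraction over all pairs \<open>(j, k)\<close>
  therefore makes all the limits in the definition of \<open>\<preceq>\<close> exist. These affine changes of time scale
  are increasing, compose exactly and invert each other, so strict inequalities between them survive
  passage to the limit: this gives transitivity, and inverting the change of scale gives totality.\<close>

lemma complete_linorder_convergent_subseq_family:
  fixes X :: "'i::countable \<Rightarrow> nat \<Rightarrow> 'a::{complete_linorder,linorder_topology}"
  shows "\<exists>r. strict_mono r \<and> (\<forall>i. convergent (X i \<circ> r))"
proof -
  define P where "P m q \<longleftrightarrow> convergent (X (from_nat m) \<circ> q)" for m q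
  interpret subseqs P
  proof
    fix m and q :: "nat \<Rightarrow> nat"
    obtain l r where "strict_mono r" "(X (from_nat m) \<circ> q \<circ> r) \<longlonglongrightarrow> l"
      using compact_complete_linorder by blast
    then show "\<exists>r. strict_mono r \<and> P m (q \<circ> r)"
      unfolding P_def convergent_def by (auto simp: o_assoc)
  qed
  have tail: "P m (diagseq \<circ> (+) (Suc m))" for m
    by (rule diagseq_holds) (metis P_def comp_assoc convergent_subseq_convergent)
  have "P m diagseq" for m
  proof -
    have "convergent (\<lambda>n. (X (from_nat m) \<circ> diagseq) (n + Suc m))"
      using tail[of m] by (simp add: P_def o_def add.commute)
    then show ?thesis
      unfolding P_def by (simp only: convergent_ignore_initial_segment)
  qed
  then show ?thesis
    using subseq_diagseq by (metis P_def from_nat_to_nat)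
qed

text \<open>If \<open>a\<close> stays bounded, \<open>T a + b\<close> is a sum of limits without \<open>\<infinity> - \<infinity>\<close>; otherwise
  \<open>T a + b = a (T + b/a)\<close>, a product of limits unless \<open>T = -C\<close>, where it is \<open>b - C a\<close>.\<close>

lemma ereal_convergent_affine:
  fixes a b :: "nat \<Rightarrow> real"
  assumes a: "(\<lambda>n. ereal (a n)) \<longlonglongrightarrow> A" and b: "(\<lambda>n. ereal (b n)) \<longlonglongrightarrow> B"
    and ratio: "(\<lambda>n. ereal (b n / a n)) \<longlonglongrightarrow> C"
    and shifted: "(\<lambda>n. ereal (b n - real_of_ereal C * a n)) \<longlonglongrightarrow> D"
  shows "convergent (\<lambda>n. ereal (T * a n + b n))"
proof (cases "\<bar>A\<bar> = \<infinity>")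
  case False
  have "(\<lambda>n. ereal T * ereal (a n)) \<longlonglongrightarrow> ereal T * A"
    by (rule tendsto_mult_ereal[OF tendsto_const a]) (use False in auto)
  then have "(\<lambda>n. ereal T * ereal (a n) + ereal (b n)) \<longlonglongrightarrow> ereal T * A + B"
    by (intro tendsto_add_ereal_general2[OF _ _ b]) (use False in auto)
  then show ?thesis unfolding convergent_def by auto
next
  case A_infinite: True
  show ?thesis
  proof (cases "T + C = 0")
    case False
    have "eventually (\<lambda>n. ereal (a n) \<noteq> ereal 0) sequentially"
      using a A_infinite by (intro tendsto_imp_eventually_ne) auto
    then have factor: "eventually (\<lambda>n. ereal (a n) * (ereal T + ereal (b n / a n))
        = ereal (T * a n + b n)) sequentially"
      by eventually_elim (simp add: field_simps)
    have "(\<lambda>n. ereal T + ereal (b n / a n)) \<longlonglongrightarrow> ereal T + C"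
      by (intro tendsto_add_ereal_general2[OF _ _ ratio]) auto
    then have "(\<lambda>n. ereal (a n) * (ereal T + ereal (b n / a n))) \<longlonglongrightarrow> A * (ereal T + C)"
      by (intro tendsto_mult_ereal[OF a]) (use False A_infinite in auto)
    then have "(\<lambda>n. ereal (T * a n + b n)) \<longlonglongrightarrow> A * (ereal T + C)"
      using factor by (rule Lim_transform_eventually)
    then show ?thesis unfolding convergent_def by auto
  next
    case True
    then have "real_of_ereal C = - T"
      by (cases C) (auto simp: ereal_plus_eq_PInfty)
    then show ?thesis
      using shifted unfolding convergent_def by (auto simp: algebra_simps)
  qed
qed

lemma ereal_convergent_affine_subseq:
  fixes a b :: "'i::countable \<Rightarrow> nat \<Rightarrow> real"
  shows "\<exists>r. strict_mono r \<and> (\<forall>i T. convergent (\<lambda>n. ereal (T * a i (r n) + b i (r n))))"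
proof -
  define X :: "'i + 'i + 'i \<Rightarrow> nat \<Rightarrow> ereal" where
    "X p n = ereal (case p of Inl i \<Rightarrow> a i n | Inr (Inl i) \<Rightarrow> b i n | Inr (Inr i) \<Rightarrow> b i n / a i n)"
    for p n
  obtain r1 where r1: "strict_mono r1" and cv1: "\<forall>p. convergent (X p \<circ> r1)"
    using complete_linorder_convergent_subseq_family by blast
  define C where "C i = lim (\<lambda>n. ereal (b i (r1 n) / a i (r1 n)))" for i
  obtain r2 where r2: "strict_mono r2"
    and cv2: "\<forall>i. convergent ((\<lambda>n. ereal (b i (r1 n) - real_of_ereal (C i) * a i (r1 n))) \<circ> r2)"
    using complete_linorder_convergent_subseq_family
      [of "\<lambda>i n. ereal (b i (r1 n) - real_of_ereal (C i) * a i (r1 n))"] by blast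
  have "convergent (\<lambda>n. ereal (T * a i (r1 (r2 n)) + b i (r1 (r2 n))))" for i T
  proof (rule ereal_convergent_affine)
    have lim_r1: "convergent (\<lambda>n. ereal (f (r1 n)))
        \<Longrightarrow> (\<lambda>n. ereal (f (r1 (r2 n)))) \<longlonglongrightarrow> lim (\<lambda>n. ereal (f (r1 n)))" for f
      using LIMSEQ_subseq_LIMSEQ[OF _ r2] by (fastforce simp: convergent_LIMSEQ_iff o_def)
    show "(\<lambda>n. ereal (a i (r1 (r2 n)))) \<longlonglongrightarrow> lim (\<lambda>n. ereal (a i (r1 n)))"
      using cv1[rule_format, of "Inl i"] by (intro lim_r1) (simp add: X_def o_def)
    show "(\<lambda>n. ereal (b i (r1 (r2 n)))) \<longlonglongrightarrow> lim (\<lambda>n. ereal (b i (r1 n)))"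
      using cv1[rule_format, of "Inr (Inl i)"] by (intro lim_r1) (simp add: X_def o_def)
    show "(\<lambda>n. ereal (b i (r1 (r2 n)) / a i (r1 (r2 n)))) \<longlonglongrightarrow> C i"
      using cv1[rule_format, of "Inr (Inr i)"] unfolding C_def
      by (intro lim_r1[of "\<lambda>n. b i n / a i n", simplified]) (simp add: X_def o_def)
    show "(\<lambda>n. ereal (b i (r1 (r2 n)) - real_of_ereal (C i) * a i (r1 (r2 n))))
        \<longlonglongrightarrow> lim ((\<lambda>n. ereal (b i (r1 n) - real_of_ereal (C i) * a i (r1 n))) \<circ> r2)"
      using cv2 by (simp add: convergent_LIMSEQ_iff o_def)
  qed
  then show ?thesis
    using strict_mono_o[OF r1 r2] by (intro exI[of _ "r1 \<circ> r2"]) simp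
qed

text \<open>\<open>time_transfer lam t j k n T\<close> is the time, in the scale of profile \<open>k\<close>, at which
  profile \<open>j\<close> reaches its own time \<open>T\<close>.\<close>

definition time_transfer ::
    "(nat \<Rightarrow> nat \<Rightarrow> real) \<Rightarrow> (nat \<Rightarrow> nat \<Rightarrow> real) \<Rightarrow> nat \<Rightarrow> nat \<Rightarrow> nat \<Rightarrow> real \<Rightarrow> real" where
  "time_transfer lam t j k n T = (lam j n * T + t j n - t k n) / lam k n"

lemma time_transfer_affine:
  "time_transfer lam t j k n T = T * (lam j n / lam k n) + (t j n - t k n) / lam k n"
  by (simp add: time_transfer_def add_divide_distrib diff_divide_distrib)

lemma time_transfer_self: "lam j n > 0 \<Longrightarrow> time_transfer lam t j j n T = T"
  by (simp add: time_transfer_def)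

lemma time_transfer_trans:
  "lam k n > 0 \<Longrightarrow> time_transfer lam t k l n (time_transfer lam t j k n T) = time_transfer lam t j l n T"
  by (simp add: time_transfer_def)

lemma time_transfer_less_iff:
  assumes "lam j n > 0" "lam k n > 0"
  shows "time_transfer lam t j k n T < S \<longleftrightarrow> T < time_transfer lam t k j n S"
  using assms by (simp add: time_transfer_def pos_divide_less_eq pos_less_divide_eq algebra_simps)

lemma time_transfer_mono:
  "lam j n > 0 \<Longrightarrow> lam k n > 0 \<Longrightarrow> T \<le> T' \<Longrightarrow> time_transfer lam t j k n T \<le> time_transfer lam t j k n T'"
  by (simp add: time_transfer_def divide_right_mono)

lemma convergent_time_transfer_subseq:
  fixes lam t :: "nat \<Rightarrow> nat \<Rightarrow> real"
  shows "\<exists>r. strict_mono r \<and>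
    (\<forall>j k T. convergent (\<lambda>n. ereal (time_transfer (\<lambda>j n. lam j (r n)) (\<lambda>j n. t j (r n)) j k n T)))"
  using ereal_convergent_affine_subseq[of "\<lambda>(j, k) n. lam j n / lam k n" "\<lambda>(j, k) n. (t j n - t k n) / lam k n"]
  by (simp add: time_transfer_affine)

lemma prec_rel_time_transfer:
  "prec_rel sc Tp lam t j k \<longleftrightarrow> sc k \<or>
     (\<not> sc j \<and> (\<forall>T. ereal T < Tp j \<longrightarrow> lim (\<lambda>n. ereal (time_transfer lam t j k n T)) < Tp k))"
  unfolding prec_rel_def time_transfer_def ..

lemma lim_time_transfer_trans_le:
  assumes cv: "\<And>j k T. convergent (\<lambda>n. ereal (time_transfer lam t j k n T))"
    and pos: "\<And>n. lam k n > 0" "\<And>n. lam l n > 0"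
    and less: "lim (\<lambda>n. ereal (time_transfer lam t j k n T)) < ereal T'"
  shows "lim (\<lambda>n. ereal (time_transfer lam t j l n T)) \<le> lim (\<lambda>n. ereal (time_transfer lam t k l n T'))"
proof (rule tendsto_le[OF _ cv[unfolded convergent_LIMSEQ_iff] cv[unfolded convergent_LIMSEQ_iff]])
  have "eventually (\<lambda>n. time_transfer lam t j k n T < T') sequentially"
    using order_tendstoD(2)[OF cv[unfolded convergent_LIMSEQ_iff] less] by simp
  then show "eventually (\<lambda>n. ereal (time_transfer lam t j l n T)
      \<le> ereal (time_transfer lam t k l n T')) sequentially"
    by eventually_elim (metis pos ereal_less_eq(3) less_imp_le time_transfer_mono time_transfer_trans)
qed simp

lemma lim_time_transfer_swap_le:
  assumes cv: "\<And>j k T. convergent (\<lambda>n. ereal (time_transfer lam t j k n T))"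
    and pos: "\<And>n. lam j n > 0" "\<And>n. lam k n > 0"
    and less: "ereal T < lim (\<lambda>n. ereal (time_transfer lam t j k n T0))"
  shows "lim (\<lambda>n. ereal (time_transfer lam t k j n T)) \<le> ereal T0"
proof (rule tendsto_le[OF _ tendsto_const cv[unfolded convergent_LIMSEQ_iff]])
  have "eventually (\<lambda>n. T < time_transfer lam t j k n T0) sequentially"
    using order_tendstoD(1)[OF cv[unfolded convergent_LIMSEQ_iff] less] by simp
  then show "eventually (\<lambda>n. ereal (time_transfer lam t k j n T) \<le> ereal T0) sequentially"
    by eventually_elim (use pos in \<open>simp add: time_transfer_less_iff less_imp_le\<close>)
qed simp

lemma prec_rel_refl: "(\<And>n. lam j n > 0) \<Longrightarrow> prec_rel sc Tp lam t j j"
  by (simp add: prec_rel_time_transfer time_transfer_self)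

lemma prec_rel_trans:
  assumes cv: "\<And>j k T. convergent (\<lambda>n. ereal (time_transfer lam t j k n T))"
    and pos: "\<And>n. lam k n > 0" "\<And>n. lam l n > 0"
    and jk: "prec_rel sc Tp lam t j k" and kl: "prec_rel sc Tp lam t k l"
  shows "prec_rel sc Tp lam t j l"
proof (cases "sc l")
  case False
  with kl have "\<not> sc k" and kl_lim: "\<And>T'. ereal T' < Tp k \<Longrightarrow>
      lim (\<lambda>n. ereal (time_transfer lam t k l n T')) < Tp l"
    unfolding prec_rel_time_transfer by auto
  with jk have "\<not> sc j" and jk_lim: "\<And>T. ereal T < Tp j \<Longrightarrow>
      lim (\<lambda>n. ereal (time_transfer lam t j k n T)) < Tp k"
    unfolding prec_rel_time_transfer by auto
  have "lim (\<lambda>n. ereal (time_transfer lam t j l n T)) < Tp l" if T: "ereal T < Tp j" for T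
  proof -
    obtain T' where T': "lim (\<lambda>n. ereal (time_transfer lam t j k n T)) < ereal T'" "ereal T' < Tp k"
      using ereal_dense2[OF jk_lim[OF T]] by blast
    have "lim (\<lambda>n. ereal (time_transfer lam t j l n T))
        \<le> lim (\<lambda>n. ereal (time_transfer lam t k l n T'))"
      using lim_time_transfer_trans_le[OF cv pos T'(1)] .
    also have "\<dots> < Tp l" using kl_lim[OF T'(2)] .
    finally show ?thesis .
  qed
  with \<open>\<not> sc j\<close> show ?thesis unfolding prec_rel_time_transfer by blast
qed (simp add: prec_rel_time_transfer)

lemma prec_rel_total:
  assumes cv: "\<And>j k T. convergent (\<lambda>n. ereal (time_transfer lam t j k n T))"
    and pos: "\<And>n. lam j n > 0" "\<And>n. lam k n > 0"
  shows "prec_rel sc Tp lam t j k \<or> prec_rel sc Tp lam t k j"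
proof (rule ccontr)
  assume "\<not> ?thesis"
  then obtain T0 where "\<not> sc j" "\<not> sc k" and T0: "ereal T0 < Tp j"
    and T0_late: "Tp k \<le> lim (\<lambda>n. ereal (time_transfer lam t j k n T0))"
    unfolding prec_rel_time_transfer by (auto simp: not_less)
  have "lim (\<lambda>n. ereal (time_transfer lam t k j n T)) < Tp j" if "ereal T < Tp k" for T
  proof -
    have "lim (\<lambda>n. ereal (time_transfer lam t k j n T)) \<le> ereal T0"
      using that T0_late by (intro lim_time_transfer_swap_le[OF cv pos]) simp
    also have "\<dots> < Tp j" by (rule T0)
    finally show ?thesis .
  qed
  with \<open>\<not> ?thesis\<close> \<open>\<not> sc k\<close> show False unfolding prec_rel_time_transfer by blast
qed

theorem claim3p3:
  fixes u0 u1 :: "nat \<Rightarrow> real^'n::finite \<Rightarrow> real"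
    and W Wt :: "nat \<Rightarrow> real \<Rightarrow> real^'n \<Rightarrow> real"
    and UL VL U V :: "nat \<Rightarrow> real \<Rightarrow> real^'n \<Rightarrow> real"
    and lam t :: "nat \<Rightarrow> nat \<Rightarrow> real"
    and x :: "nat \<Rightarrow> nat \<Rightarrow> real^'n"
    and Tm Tp :: "nat \<Rightarrow> ereal"
  assumes dim: "CARD('n) \<in> {3, 4, 5}"
    and bdd: "\<exists>C. \<forall>n. Hdot1 (u0 n) \<and> in_Lp 2 (u1 n) \<and> E_norm (u0 n) (u1 n) \<le> C"
    and free: "\<forall>n. wave_sol 0 UNIV (W n) (Wt n) \<and> W n 0 = u0 n \<and> Wt n 0 = u1 n"
    and lin_prof: "\<forall>j\<ge>1. wave_sol 0 UNIV (UL j) (VL j)"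
    and lam_pos: "\<forall>j\<ge>1. \<forall>n. lam j n > 0"
    and orth: "\<forall>j\<ge>1. \<forall>k\<ge>1. j \<noteq> k \<longrightarrow>
        filterlim (\<lambda>n. \<bar>ln (lam j n / lam k n)\<bar> + \<bar>t j n - t k n\<bar> / lam j n
                       + norm (x j n - x k n) / lam j n) at_top sequentially"
    and decomp: "((\<lambda>J. limsup (\<lambda>n. S_int UNIV (\<lambda>s y. W n s y
            - (\<Sum>j\<in>{1..J}. resc (lam j n) (t j n) (x j n) (UL j) s y)))) \<longlongrightarrow> 0) sequentially"
    and conv: "\<forall>j\<ge>1. convergent (\<lambda>n. ereal (- t j n / lam j n))"
    and nonlin: "\<forall>j\<ge>1. maximal_sol (U j) (V j) (Tm j) (Tp j) \<and>
        eventually (\<lambda>n. - t j n / lam j n \<in> eint (Tm j) (Tp j)) sequentially \<and>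
        ((\<lambda>n. E_norm (\<lambda>y. UL j (- t j n / lam j n) y - U j (- t j n / lam j n) y)
                       (\<lambda>y. VL j (- t j n / lam j n) y - V j (- t j n / lam j n) y)) \<longlongrightarrow> 0) sequentially"
  shows "\<exists>r::nat \<Rightarrow> nat. strict_mono r \<and>
    (\<forall>j\<ge>1. \<forall>k\<ge>1. \<forall>T. ereal T < Tp j \<longrightarrow>
        convergent (\<lambda>n. ereal ((lam j (r n) * T + t j (r n) - t k (r n)) / lam k (r n)))) \<and>
    (let P = prec_rel (\<lambda>k. scatters_fwd (U k) (Tm k) (Tp k)) Tp
               (\<lambda>j n. lam j (r n)) (\<lambda>j n. t j (r n)) in
      (\<forall>j\<ge>1. P j j \<and> P j j) \<and>
      (\<forall>j\<ge>1. \<forall>k\<ge>1. \<forall>l\<ge>1. P j k \<and> P k l \<longrightarrow> P j l) \<and>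
      (\<forall>j\<ge>1. \<forall>k\<ge>1. P j k \<or> P k j) \<and>
      (\<forall>j\<ge>1. \<forall>k\<ge>1. (\<not> P k j) \<longleftrightarrow> (P j k \<and> \<not> (P j k \<and> P k j))))"
proof -
  obtain r where r: "strict_mono r"
    and cv: "\<And>j k T. convergent (\<lambda>n. ereal (time_transfer (\<lambda>j n. lam j (r n)) (\<lambda>j n. t j (r n)) j k n T))"
    using convergent_time_transfer_subseq[of lam t] by blast
  define P where "P = prec_rel (\<lambda>k. scatters_fwd (U k) (Tm k) (Tp k)) Tp
    (\<lambda>j n. lam j (r n)) (\<lambda>j n. t j (r n))"
  have pos: "\<And>n. lam j (r n) > 0" if "j \<ge> 1" for j
    using lam_pos that by simp
  have refl: "P j j" if "j \<ge> 1" for j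
    unfolding P_def by (rule prec_rel_refl) (rule pos[OF that])
  have trans: "P j l" if "k \<ge> 1" "l \<ge> 1" "P j k" "P k l" for j k l
    using that(3,4) unfolding P_def by (rule prec_rel_trans[OF cv pos[OF that(1)] pos[OF that(2)]])
  have total: "P j k \<or> P k j" if "j \<ge> 1" "k \<ge> 1" for j k
    unfolding P_def by (rule prec_rel_total[OF cv pos[OF that(1)] pos[OF that(2)]])
  have order: "(\<forall>j\<ge>1. P j j \<and> P j j) \<and>
      (\<forall>j\<ge>1. \<forall>k\<ge>1. \<forall>l\<ge>1. P j k \<and> P k l \<longrightarrow> P j l) \<and>
      (\<forall>j\<ge>1. \<forall>k\<ge>1. P j k \<or> P k j) \<and>
      (\<forall>j\<ge>1. \<forall>k\<ge>1. (\<not> P k j) \<longleftrightarrow> (P j k \<and> \<not> (P j k \<and> P k j)))"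
    using refl trans total by blast
  show ?thesis
  proof (intro exI[of _ r] conjI)
    show "strict_mono r" by (rule r)
    show "\<forall>j\<ge>1. \<forall>k\<ge>1. \<forall>T. ereal T < Tp j \<longrightarrow>
        convergent (\<lambda>n. ereal ((lam j (r n) * T + t j (r n) - t k (r n)) / lam k (r n)))"
      using cv by (simp add: time_transfer_def)
  qed (unfold Let_def P_def[symmetric], fact order)
qed

end
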